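(* Let $\{\eta_n\}_{n\ge1}$ be nonzero complex numbers with $|\eta_n|$ nondecreasing, such that there exist $N,C>0$ with $|\eta_n|\ge Cn^2$ for $n\ge N$. Let $D_n$, $n=0,1,2,\dots$, be open discs of radius $R>0$ centred at $c_n$, with $c_0=0$ and $|\eta_n-c_n|\le R/2$ for $n\ge1$, and assume there is $\tilde N$ such that the closed discs $\overline D_n$ are pairwise disjoint for $n>\tilde N$. For an integer $m\ge0$ let $P(\lambda)=\lambda^m\prod_{n=1}^\infty(1-\lambda/\eta_n)$. Then $1/P\in\mathcal A_1\big(\mathbb{C}\setminus\bigcup_{n=0}^\infty\overline D_n\big)$.
   Context: For an open set $\Omega'\subset\mathbb{C}$ and $p>0$, $\mathcal A_p(\Omega')$ is the set of holomorphic $f$ on $\Omega'$ for which there exist $c,M>0$ with $|f(\lambda)|\le Me^{c|\lambda|^p}$ for all $\lambda\in\Omega'$. Here $1/P$ denotes the multiplicative inverse of $P$. *)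

theory Defs
  imports "HOL-Analysis.Analysis"
begin

definition A_class :: "real \<Rightarrow> complex set \<Rightarrow> (complex \<Rightarrow> complex) \<Rightarrow> bool" where
  "A_class p \<Omega> f \<longleftrightarrow> f holomorphic_on \<Omega> \<and>
     (\<exists>c M. c > 0 \<and> M > 0 \<and> (\<forall>w\<in>\<Omega>. norm (f w) \<le> M * exp (c * norm w powr p)))"

definition canonical_prod :: "nat \<Rightarrow> (nat \<Rightarrow> complex) \<Rightarrow> complex \<Rightarrow> complex" where
  "canonical_prod m \<eta> z = z ^ m * (\<Prod>k. 1 - z / \<eta> (Suc k))"

end

theory Submission
  imports Defs "HOL-Complex_Analysis.Complex_Analysis"
begin

(* Outside the discs, |z| > R and z is at distance at least R/2 from every zero eta_n.
   Split the factors 1 - z/eta_n at |eta_n| = 2|z|.  A far factor is at least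
   exp (-2|z|/|eta_n|), so the far factors contribute at least exp (-2|z| sum 1/|eta_n|),
   a convergent series by the quadratic growth.  A near factor is at least R/(4|z| + 2R),
   and the quadratic growth leaves only O(sqrt |z|) near factors, so they contribute at least
   exp (-O(sqrt |z| log |z|)), which is again exp (-O(|z|)). *)

lemma exp_minus_two_mult_le_one_minus:
  fixes x :: real
  assumes "0 \<le> x" "x \<le> 1/2"
  shows "exp (-2 * x) \<le> 1 - x"
proof -
  have "exp (-2 * x) \<le> 1 / (1 + 2 * x)"
    using exp_ge_add_one_self[of "2 * x"] assms by (simp add: exp_minus field_simps)
  also have "\<dots> \<le> 1 - x"
  proof -
    have "2 * x * x \<le> 1 * x" using assms by (intro mult_right_mono) auto
    thus ?thesis using assms by (simp add: field_simps)
  qed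
  finally show ?thesis .
qed

lemma norm_one_minus_divide_ge_exp:
  fixes z a :: complex
  assumes "a \<noteq> 0" "2 * norm z \<le> norm a"
  shows "exp (-2 * (norm z / norm a)) \<le> norm (1 - z / a)"
proof -
  have "exp (-2 * (norm z / norm a)) \<le> 1 - norm z / norm a"
    using assms by (intro exp_minus_two_mult_le_one_minus) (auto simp: field_simps)
  also have "\<dots> = norm (1::complex) - norm (z / a)" by (simp add: norm_divide)
  also have "\<dots> \<le> norm (1 - z / a)" by (rule norm_triangle_ineq2)
  finally show ?thesis .
qed

lemma norm_one_minus_divide_ge_dist:
  fixes z a :: complex
  assumes "a \<noteq> 0" "norm a \<le> 2 * norm z" "d \<le> norm (z - a)" "d > 0"
  shows "d / (2 * (norm z + d)) \<le> norm (1 - z / a)"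
proof -
  have "d / (2 * (norm z + d)) \<le> d / norm a"
    using assms norm_ge_zero[of z] by (intro frac_le) auto
  also have "\<dots> \<le> norm (z - a) / norm a"
    using assms by (intro divide_right_mono) auto
  also have "\<dots> = norm (1 - z / a)"
    using assms by (simp add: norm_divide[symmetric] diff_divide_distrib norm_minus_commute)
  finally show ?thesis .
qed

lemma norm_le_subset_atMost_if_quadratic_growth:
  fixes a :: "nat \<Rightarrow> 'a::real_normed_vector"
  assumes "C > 0" "\<And>n. n \<ge> N \<Longrightarrow> C * real n ^ 2 \<le> norm (a n)"
  shows "{n. norm (a n) \<le> t} \<subseteq> {..N + nat \<lceil>sqrt (t / C)\<rceil>}"
proof
  fix n assume "n \<in> {n. norm (a n) \<le> t}"
  show "n \<in> {..N + nat \<lceil>sqrt (t / C)\<rceil>}"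
  proof (cases "n \<ge> N")
    case True
    hence "C * real n ^ 2 \<le> t" using assms(2) \<open>n \<in> _\<close> by (meson mem_Collect_eq order_trans)
    hence "real n ^ 2 \<le> t / C" using assms(1) by (simp add: field_simps)
    hence "real n \<le> sqrt (t / C)" by (rule real_le_rsqrt)
    thus ?thesis by simp linarith
  qed simp
qed

lemma summable_inverse_norm_if_quadratic_growth:
  fixes a :: "nat \<Rightarrow> 'a::real_normed_vector"
  assumes "C > 0" "\<And>n. n \<ge> N \<Longrightarrow> C * real n ^ 2 \<le> norm (a n)"
  shows "summable (\<lambda>n. 1 / norm (a n))"
proof (rule summable_comparison_test')
  show "summable (\<lambda>n. 1 / C * inverse (real n ^ 2))"
    by (intro summable_mult inverse_power_summable) simp
  show "norm (1 / norm (a n)) \<le> 1 / C * inverse (real n ^ 2)" if "n \<ge> Suc N" for n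
  proof -
    have "0 < C * real n ^ 2" "C * real n ^ 2 \<le> norm (a n)"
      using assms that by auto
    hence "1 / norm (a n) \<le> 1 / (C * real n ^ 2)"
      by (intro frac_le) auto
    thus ?thesis by (simp add: field_simps)
  qed
qed

lemma norm_prod_one_minus_divide_ge:
  fixes a :: "nat \<Rightarrow> complex" and z :: complex
  assumes "finite I" "\<And>i. i \<in> I \<Longrightarrow> a i \<noteq> 0" "\<And>i. i \<in> I \<Longrightarrow> d \<le> norm (z - a i)" "d > 0"
    and "card {i\<in>I. norm (a i) \<le> 2 * norm z} \<le> K" "(\<Sum>i\<in>I. 1 / norm (a i)) \<le> S"
  shows "(d / (2 * (norm z + d))) ^ K * exp (-2 * norm z * S) \<le> norm (\<Prod>i\<in>I. 1 - z / a i)"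
proof -
  define q where "q = d / (2 * (norm z + d))"
  define J where "J = {i\<in>I. norm (a i) \<le> 2 * norm z}"
  have "0 < norm z + d" using \<open>d > 0\<close> by (simp add: add_nonneg_pos)
  hence q: "0 < q" "q \<le> 1"
    using \<open>d > 0\<close> unfolding q_def by (auto simp: divide_le_eq)
  have near: "q ^ K \<le> (\<Prod>i\<in>J. norm (1 - z / a i))"
  proof -
    have "q ^ K \<le> q ^ card J"
      using q assms(5) by (intro power_decreasing) (auto simp: J_def)
    also have "\<dots> = (\<Prod>i\<in>J. q)" by simp
    also have "\<dots> \<le> (\<Prod>i\<in>J. norm (1 - z / a i))"
    proof (rule prod_mono)
      fix i assume "i \<in> J"
      hence "q \<le> norm (1 - z / a i)"
        unfolding q_def by (intro norm_one_minus_divide_ge_dist) (use assms(2-4) J_def in auto)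
      thus "0 \<le> q \<and> q \<le> norm (1 - z / a i)" using q by simp
    qed
    finally show ?thesis .
  qed
  have far: "exp (-2 * norm z * S) \<le> (\<Prod>i\<in>I-J. norm (1 - z / a i))"
  proof -
    have "(\<Sum>i\<in>I-J. 1 / norm (a i)) \<le> (\<Sum>i\<in>I. 1 / norm (a i))"
      using assms(1) by (intro sum_mono2) auto
    hence "exp (-2 * norm z * S) \<le> exp (-2 * norm z * (\<Sum>i\<in>I-J. 1 / norm (a i)))"
      using assms(6) by (simp add: mult_left_mono)
    also have "\<dots> = (\<Prod>i\<in>I-J. exp (-2 * (norm z / norm (a i))))"
      using assms(1) by (simp add: sum_distrib_left exp_sum)
    also have "\<dots> \<le> (\<Prod>i\<in>I-J. norm (1 - z / a i))"
    proof (rule prod_mono)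
      fix i assume "i \<in> I - J"
      thus "0 \<le> exp (-2 * (norm z / norm (a i))) \<and> exp (-2 * (norm z / norm (a i))) \<le> norm (1 - z / a i)"
        using assms(2) norm_one_minus_divide_ge_exp[of "a i" z] by (auto simp: J_def)
    qed
    finally show ?thesis .
  qed
  have "J \<subseteq> I" by (auto simp: J_def)
  hence "(\<Prod>i\<in>I. 1 - z / a i) = (\<Prod>i\<in>J. 1 - z / a i) * (\<Prod>i\<in>I-J. 1 - z / a i)"
    using prod.subset_diff assms(1) by (metis mult.commute)
  hence "norm (\<Prod>i\<in>I. 1 - z / a i) = (\<Prod>i\<in>J. norm (1 - z / a i)) * (\<Prod>i\<in>I-J. norm (1 - z / a i))"
    by (simp only: norm_mult prod_norm)
  with near far q show ?thesis
    unfolding q_def[symmetric] by (simp add: mult_mono prod_nonneg)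
qed

lemma norm_prodinf_one_minus_divide_ge:
  fixes a :: "nat \<Rightarrow> complex" and z :: complex
  assumes "\<And>n. a n \<noteq> 0" "\<And>n. d \<le> norm (z - a n)" "d > 0" "summable (\<lambda>n. 1 / norm (a n))"
    and "finite {n. norm (a n) \<le> 2 * norm z}" "card {n. norm (a n) \<le> 2 * norm z} \<le> K"
  shows "(d / (2 * (norm z + d))) ^ K * exp (-2 * norm z * (\<Sum>n. 1 / norm (a n)))
           \<le> norm (\<Prod>n. 1 - z / a n)"
proof (rule tendsto_lowerbound)
  have "summable (\<lambda>n. norm z * (1 / norm (a n)))"
    using assms(4) by (rule summable_mult)
  hence "abs_convergent_prod (\<lambda>n. 1 - z / a n)"
    by (simp add: abs_convergent_prod_conv_summable norm_divide)
  thus "(\<lambda>n. norm (\<Prod>i\<le>n. 1 - z / a i)) \<longlonglongrightarrow> norm (\<Prod>n. 1 - z / a n)"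
    by (intro tendsto_norm convergent_prod_LIMSEQ abs_convergent_prod_imp_convergent_prod)
  show "\<forall>\<^sub>F n in sequentially. (d / (2 * (norm z + d))) ^ K * exp (-2 * norm z * (\<Sum>n. 1 / norm (a n)))
          \<le> norm (\<Prod>i\<le>n. 1 - z / a i)"
  proof (intro always_eventually allI norm_prod_one_minus_divide_ge)
    fix n
    have "card {i\<in>{..n}. norm (a i) \<le> 2 * norm z} \<le> card {n. norm (a n) \<le> 2 * norm z}"
      using assms(5) by (intro card_mono) auto
    thus "card {i\<in>{..n}. norm (a i) \<le> 2 * norm z} \<le> K" using assms(6) by linarith
    show "(\<Sum>i\<le>n. 1 / norm (a i)) \<le> (\<Sum>n. 1 / norm (a n))"
      using assms(4) by (intro sum_le_suminf) auto
  qed (use assms in auto)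
qed simp

lemma filterlim_at_infinity_if_summable_inverse_norm:
  fixes a :: "nat \<Rightarrow> 'a::real_normed_vector"
  assumes "\<And>n. a n \<noteq> 0" "summable (\<lambda>n. 1 / norm (a n))"
  shows "filterlim a at_infinity sequentially"
proof -
  have "filterlim (\<lambda>n. inverse (1 / norm (a n))) at_top sequentially"
    using assms by (intro filterlim_inverse_at_top summable_LIMSEQ_zero always_eventually) auto
  thus ?thesis by (simp add: filterlim_at_infinity_conv_norm_at_top)
qed

lemma weierstrass_product_genus_zero:
  assumes "\<And>n. a n \<noteq> 0" "summable (\<lambda>n. 1 / norm (a n))"
  shows "weierstrass_product a (\<lambda>_. 0)"
proof
  show "a n \<noteq> 0" for n by (rule assms(1))
  show "filterlim a at_infinity sequentially"
    using assms by (rule filterlim_at_infinity_if_summable_inverse_norm)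
  show "summable (\<lambda>n. (r / norm (a n)) ^ Suc 0)" for r
    using summable_mult[OF assms(2), of r] by simp
qed

lemma power_ge_exp_linear:
  fixes q r L M :: real
  assumes "0 < q" "q \<le> 1" "1 / q \<le> M * (1 + r)" "real K \<le> L * sqrt (1 + r)" "0 \<le> r"
  shows "exp (-2 * L * sqrt M * (1 + r)) \<le> q ^ K"
proof -
  have "1 \<le> 1 / q" using assms(1,2) by simp
  have ln_le: "ln (1 / q) \<le> 2 * sqrt M * sqrt (1 + r)"
  proof -
    have "ln (1 / q) = 2 * ln (sqrt (1 / q))" using assms(1) by (simp add: ln_sqrt)
    also have "\<dots> \<le> 2 * sqrt (1 / q)" using assms(1) ln_le_minus_one[of "sqrt (1 / q)"] by simp
    also have "\<dots> \<le> 2 * sqrt (M * (1 + r))" using assms(3) by simp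
    finally show ?thesis by (simp add: real_sqrt_mult)
  qed
  have "real K * ln (1 / q) \<le> L * sqrt (1 + r) * (2 * sqrt M * sqrt (1 + r))"
    using \<open>1 \<le> 1 / q\<close> ln_le assms(4) by (intro mult_mono) auto
  also have "\<dots> = 2 * L * sqrt M * (1 + r)" using assms(5) by (simp add: algebra_simps)
  finally have "exp (-2 * L * sqrt M * (1 + r)) \<le> exp (- (real K * ln (1 / q)))" by simp
  also have "\<dots> = q ^ K" using assms(1) by (simp add: ln_div exp_of_nat_mult)
  finally show ?thesis .
qed

lemma norm_prodinf_one_minus_divide_ge_exp_linear:
  fixes a :: "nat \<Rightarrow> complex"
  assumes "\<And>n. a n \<noteq> 0" "d > 0" "C > 0" "\<And>n. n \<ge> N \<Longrightarrow> C * real n ^ 2 \<le> norm (a n)"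
  obtains B where "B > 0"
    "\<And>z. (\<And>n. d \<le> norm (z - a n)) \<Longrightarrow> exp (- B * (1 + norm z)) \<le> norm (\<Prod>n. 1 - z / a n)"
proof
  define S where "S = (\<Sum>n. 1 / norm (a n))"
  define L where "L = N + 2 + sqrt (2 / C)"
  define M where "M = 2 + 2 / d"
  have summable: "summable (\<lambda>n. 1 / norm (a n))"
    using assms(3,4) by (rule summable_inverse_norm_if_quadratic_growth)
  hence "S \<ge> 0" unfolding S_def by (intro suminf_nonneg) auto
  moreover have "L > 0" "M > 0" using assms(2,3) by (auto simp: L_def M_def intro!: add_pos_nonneg)
  ultimately show "2 * L * sqrt M + 2 * S > 0" by (simp add: add_pos_nonneg)
  fix z :: complex assume dist: "\<And>n. d \<le> norm (z - a n)"
  define q where "q = d / (2 * (norm z + d))"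
  define K where "K = Suc (N + nat \<lceil>sqrt (2 * norm z / C)\<rceil>)"
  have "{n. norm (a n) \<le> 2 * norm z} \<subseteq> {..N + nat \<lceil>sqrt (2 * norm z / C)\<rceil>}"
    using assms(3,4) by (rule norm_le_subset_atMost_if_quadratic_growth)
  hence "finite {n. norm (a n) \<le> 2 * norm z}" "card {n. norm (a n) \<le> 2 * norm z} \<le> K"
    unfolding K_def using card_mono[OF finite_atMost] by (auto intro: finite_subset)
  hence prod_ge: "q ^ K * exp (-2 * norm z * S) \<le> norm (\<Prod>n. 1 - z / a n)"
    unfolding q_def S_def by (rule norm_prodinf_one_minus_divide_ge[OF assms(1) dist assms(2) summable])
  have K_le: "real K \<le> L * sqrt (1 + norm z)"
  proof -
    have "real (nat \<lceil>sqrt (2 * norm z / C)\<rceil>) \<le> sqrt (2 * norm z / C) + 1"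
      using of_int_ceiling_le_add_one[of "sqrt (2 * norm z / C)"] assms(3) by (simp add: of_nat_nat)
    hence "real K \<le> N + 2 + sqrt (2 / C) * sqrt (norm z)"
      unfolding K_def by (simp add: real_sqrt_mult[symmetric])
    also have "\<dots> \<le> (N + 2) * sqrt (1 + norm z) + sqrt (2 / C) * sqrt (1 + norm z)"
      using assms(3) by (intro add_mono mult_left_mono) auto
    finally show ?thesis by (simp add: L_def algebra_simps)
  qed
  have "0 < norm z + d" using assms(2) by (simp add: add_nonneg_pos)
  hence q: "0 < q" "q \<le> 1" "1 / q \<le> M * (1 + norm z)"
    using assms(2) by (auto simp: q_def M_def field_simps)
  hence "exp (-2 * L * sqrt M * (1 + norm z)) \<le> q ^ K"
    using K_le by (intro power_ge_exp_linear) auto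
  moreover have "exp (-2 * S * (1 + norm z)) \<le> exp (-2 * norm z * S)"
    using \<open>S \<ge> 0\<close> by (simp add: algebra_simps)
  ultimately have "exp (-2 * L * sqrt M * (1 + norm z)) * exp (-2 * S * (1 + norm z))
      \<le> q ^ K * exp (-2 * norm z * S)"
    using q(1) by (intro mult_mono) auto
  with prod_ge show "exp (- (2 * L * sqrt M + 2 * S) * (1 + norm z)) \<le> norm (\<Prod>n. 1 - z / a n)"
    by (simp add: exp_add[symmetric] algebra_simps)
qed

lemma norm_diff_ge_if_notin_cball:
  fixes z e c :: "'a::real_normed_vector"
  assumes "z \<notin> cball c R" "norm (e - c) \<le> R / 2"
  shows "R / 2 \<le> norm (z - e)"
proof -
  have "R < norm (z - c)" using assms(1) by (simp add: dist_norm norm_minus_commute)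
  also have "\<dots> \<le> norm (z - e) + norm (e - c)" using norm_triangle_ineq[of "z - e" "e - c"] by simp
  finally show ?thesis using assms(2) by simp
qed

lemma A_class_one_inverse_monomial_mult:
  fixes f :: "complex \<Rightarrow> complex"
  assumes "f holomorphic_on \<Omega>" "R > 0" "B > 0"
    and "\<And>z. z \<in> \<Omega> \<Longrightarrow> R \<le> norm z" "\<And>z. z \<in> \<Omega> \<Longrightarrow> exp (- B * (1 + norm z)) \<le> norm (f z)"
  shows "A_class 1 \<Omega> (\<lambda>z. 1 / (z ^ m * f z))"
  unfolding A_class_def
proof (intro conjI)
  have "z ^ m * f z \<noteq> 0" if "z \<in> \<Omega>" for z
    using assms(2) assms(4,5)[OF that] exp_gt_zero[of "- B * (1 + norm z)"] by auto
  thus "(\<lambda>z. 1 / (z ^ m * f z)) holomorphic_on \<Omega>"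
    by (intro holomorphic_intros assms(1))
  have "norm (1 / (z ^ m * f z)) \<le> exp B / R ^ m * exp (B * norm z powr 1)" if "z \<in> \<Omega>" for z
  proof -
    have "norm (1 / (z ^ m * f z)) = (1 / norm z ^ m) * (1 / norm (f z))"
      by (simp add: norm_divide norm_mult norm_power)
    also have "\<dots> \<le> (1 / R ^ m) * (1 / exp (- B * (1 + norm z)))"
      using assms(2) assms(4,5)[OF that] by (intro mult_mono frac_le power_mono) auto
    also have "\<dots> = exp B / R ^ m * exp (B * norm z powr 1)"
      by (simp only: mult_minus_left exp_minus divide_inverse inverse_inverse_eq mult_1_left)
        (simp add: distrib_left exp_add)
    finally show ?thesis .
  qed
  moreover have "0 < exp B / R ^ m" using assms(2) by simp
  ultimately show "\<exists>c M. 0 < c \<and> 0 < M \<and> (\<forall>z\<in>\<Omega>. norm (1 / (z ^ m * f z)) \<le> M * exp (c * norm z powr 1))"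
    using assms(3) by blast
qed

theorem proposition8:
  fixes \<eta> :: "nat \<Rightarrow> complex" and c :: "nat \<Rightarrow> complex" and R :: real and m :: nat
  assumes nonzero: "\<forall>n\<ge>1. \<eta> n \<noteq> 0"
    and mono: "\<forall>n\<ge>1. norm (\<eta> n) \<le> norm (\<eta> (Suc n))"
    and growth: "\<exists>N C. N > 0 \<and> C > 0 \<and> (\<forall>n\<ge>N. norm (\<eta> n) \<ge> C * real n ^ 2)"
    and R_pos: "R > 0"
    and c0: "c 0 = 0"
    and near: "\<forall>n\<ge>1. norm (\<eta> n - c n) \<le> R / 2"
    and disj: "\<exists>N'. \<forall>n m'. n > N' \<and> m' > N' \<and> n \<noteq> m' \<longrightarrow> cball (c n) R \<inter> cball (c m') R = {}"
  shows "A_class 1 (- (\<Union>n. cball (c n) R)) (\<lambda>z. 1 / canonical_prod m \<eta> z)"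
proof -
  obtain N C where "C > 0" and growth_\<eta>: "\<And>n. n \<ge> N \<Longrightarrow> C * real n ^ 2 \<le> norm (\<eta> n)"
    using growth by blast
  define a where "a n = \<eta> (Suc n)" for n
  have a_nonzero: "a n \<noteq> 0" for n using nonzero by (simp add: a_def)
  have growth_a: "C * real n ^ 2 \<le> norm (a n)" if "n \<ge> N" for n
  proof -
    have "C * real n ^ 2 \<le> C * real (Suc n) ^ 2"
      using \<open>C > 0\<close> by (intro mult_left_mono power_mono) auto
    also have "\<dots> \<le> norm (a n)" using growth_\<eta>[of "Suc n"] that by (simp add: a_def)
    finally show ?thesis .
  qed
  interpret W: weierstrass_product a "\<lambda>_. 0"
    using a_nonzero summable_inverse_norm_if_quadratic_growth[OF \<open>C > 0\<close> growth_a]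
    by (rule weierstrass_product_genus_zero)
  have P_eq: "canonical_prod m \<eta> = (\<lambda>z. z ^ m * W.f z)"
    by (simp add: fun_eq_iff canonical_prod_def W.f_def weierstrass_factor_def a_def)
  obtain B where "B > 0" and lower: "\<And>z. (\<And>n. R / 2 \<le> norm (z - a n)) \<Longrightarrow>
      exp (- B * (1 + norm z)) \<le> norm (W.f z)"
    using norm_prodinf_one_minus_divide_ge_exp_linear[OF a_nonzero _ \<open>C > 0\<close> growth_a, of "R / 2"] R_pos
    by (auto simp: W.f_def weierstrass_factor_def)
  have outside: "R \<le> norm z" "R / 2 \<le> norm (z - a n)" if "z \<in> - (\<Union>n. cball (c n) R)" for z n
  proof -
    have "z \<notin> cball (c 0) R" using that by blast
    thus "R \<le> norm z" using c0 by simp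
    have "z \<notin> cball (c (Suc n)) R" using that by blast
    moreover have "norm (a n - c (Suc n)) \<le> R / 2" using near by (simp add: a_def)
    ultimately show "R / 2 \<le> norm (z - a n)" by (rule norm_diff_ge_if_notin_cball)
  qed
  show ?thesis unfolding P_eq
    using R_pos \<open>B > 0\<close> outside lower
    by (intro A_class_one_inverse_monomial_mult[where R = R and B = B] W.holomorphic) auto
qed

end
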